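(* Let $(X,\mu)$ be a discrete-time BRW with global extinction probability vector $\bar q$, and assume $\bar q\neq\mathbf 1$, i.e. $\bar q(x)<1$ for some $x\in X$. Let $z\in[0,1]^X$ satisfy $z\ge\bar q$ and $G(z|x)\ge z(x)$ for all $x\in X$. Define $\widehat z\in[0,1]^X$ by $\widehat z(x):=\frac{z(x)-\bar q(x)}{1-\bar q(x)}$ if $\bar q(x)<1$ and $\widehat z(x):=1$ if $\bar q(x)=1$. Then for every $x\in X$ such that $\mathcal N_x:=\{y\in X:m_{xy}>0\}$ is nonempty, either $\widehat z(y)=\widehat z(x)$ for all $y\in\mathcal N_x$, or there exists $y\in\mathcal N_x$ with $\widehat z(y)>\widehat z(x)$. In particular, if $\widehat z(x)=1$ then $\widehat z(y)=1$ for all $y\in\mathcal N_x$. The same conclusions hold with $\mathcal N_x$ replaced by the set $\{y\in X: x\to y\}$.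
   Context: $X$ is a finite or countable set and $S_X:=\{f:X\to\mathbb N:\sum_{y}f(y)<\infty\}$. A discrete-time branching random walk (BRW) $(X,\mu)$ is given by a family $\mu=\{\mu_x\}_{x\in X}$ of probability measures on $S_X$: at each generation, each particle at $x$ is replaced, independently of all others, by $f(y)$ particles at $y$ for every $y\in X$, where $f$ is drawn from $\mu_x$. $\eta_n(x)$ is the number of particles at $x$ at generation $n$. The first-moment matrix is $M=(m_{xy})$, $m_{xy}:=\sum_{f\in S_X}f(y)\mu_x(f)$, and it is assumed that $\sup_x\sum_y m_{xy}<\infty$. We write $x\to y$ if there is a finite sequence $x=x_0,x_1,\dots,x_n=y$ ($n\ge0$) with $m_{x_ix_{i+1}}>0$ for all $i$; $x\rightleftharpoons y$ means $x\to y$ and $y\to x$. Standing assumption: in every $\rightleftharpoons$-class there is a vertex $y$ with $\mu_y(\{f:\sum_{w\rightleftharpoons y}f(w)=1\})<1$. The generating function $G:[0,1]^X\to[0,1]^X$ is $G(z|x):=\sum_{f\in S_X}\mu_x(f)\prod_{y\in X}z(y)^{f(y)}$. For $A\subseteq X$, $q(x,A)$ is the probability, starting from one particle at $x$, that there is $N$ with $\eta_n(y)=0$ for all $n\ge N$ and all $y\in A$ (local extinction in $A$); $\bar q(x):=q(x,X)$ is the global extinction probability. Inequalities between elements of $[0,1]^X$ are coordinatewise. *)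

theory Defs
  imports "HOL-Probability.Probability"
begin

text \<open>A BRW on a countable type 'x is a family mu :: 'x => ('x => nat) pmf
  of offspring laws, each supported on finitely supported configurations.\<close>

definition fin_supp :: "('x \<Rightarrow> nat) \<Rightarrow> bool" where
  "fin_supp f \<longleftrightarrow> finite {y. f y \<noteq> 0}"

definition is_BRW :: "('x \<Rightarrow> ('x \<Rightarrow> nat) pmf) \<Rightarrow> bool" where
  "is_BRW mu \<longleftrightarrow> (\<forall>x. set_pmf (mu x) \<subseteq> {f. fin_supp f})"

definition mom :: "('x \<Rightarrow> ('x \<Rightarrow> nat) pmf) \<Rightarrow> 'x \<Rightarrow> 'x \<Rightarrow> ennreal" where
  "mom mu x y = (\<integral>\<^sup>+ f. ennreal (real (f y)) \<partial>measure_pmf (mu x))"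

definition reach :: "('x \<Rightarrow> ('x \<Rightarrow> nat) pmf) \<Rightarrow> 'x \<Rightarrow> 'x \<Rightarrow> bool" where
  "reach mu x y \<longleftrightarrow> (x, y) \<in> {(a, b). mom mu a b > 0}\<^sup>*"

definition commun :: "('x \<Rightarrow> ('x \<Rightarrow> nat) pmf) \<Rightarrow> 'x \<Rightarrow> 'x \<Rightarrow> bool" where
  "commun mu x y \<longleftrightarrow> reach mu x y \<and> reach mu y x"

text \<open>Standing assumptions: bounded row sums of M and the non-degeneracy of every class.\<close>
definition BRW_standing :: "('x \<Rightarrow> ('x \<Rightarrow> nat) pmf) \<Rightarrow> bool" where
  "BRW_standing mu \<longleftrightarrow>
     is_BRW mu \<and>
     (SUP x. \<integral>\<^sup>+ y. mom mu x y \<partial>count_space UNIV) < \<top> \<and>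
     (\<forall>x. \<exists>y. commun mu x y \<and>
        measure_pmf.prob (mu y)
          {f. (\<Sum>w\<in>{w. commun mu w y \<and> f w \<noteq> 0}. f w) = 1} < 1)"

definition genfun :: "('x \<Rightarrow> ('x \<Rightarrow> nat) pmf) \<Rightarrow> ('x \<Rightarrow> real) \<Rightarrow> 'x \<Rightarrow> real" where
  "genfun mu z x = measure_pmf.expectation (mu x) (\<lambda>f. \<Prod>y\<in>{y. f y \<noteq> 0}. z y ^ f y)"

primrec offspring_rep :: "('x \<Rightarrow> ('x \<Rightarrow> nat) pmf) \<Rightarrow> 'x \<Rightarrow> nat \<Rightarrow> ('x \<Rightarrow> nat) pmf" where
  "offspring_rep mu x 0 = return_pmf (\<lambda>_. 0)"
| "offspring_rep mu x (Suc n) =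
     bind_pmf (mu x) (\<lambda>f. bind_pmf (offspring_rep mu x n) (\<lambda>g. return_pmf (\<lambda>y. f y + g y)))"

definition brw_step :: "('x \<Rightarrow> ('x \<Rightarrow> nat) pmf) \<Rightarrow> ('x \<Rightarrow> nat) \<Rightarrow> ('x \<Rightarrow> nat) pmf" where
  "brw_step mu eta =
     (let S = {x. eta x \<noteq> 0} in
      map_pmf (\<lambda>F y. \<Sum>x\<in>S. F x y) (Pi_pmf S (\<lambda>_. 0) (\<lambda>x. offspring_rep mu x (eta x))))"

primrec brw_dist :: "('x \<Rightarrow> ('x \<Rightarrow> nat) pmf) \<Rightarrow> 'x \<Rightarrow> nat \<Rightarrow> ('x \<Rightarrow> nat) pmf" where
  "brw_dist mu x0 0 = return_pmf (\<lambda>y. if y = x0 then 1 else 0)"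
| "brw_dist mu x0 (Suc n) = bind_pmf (brw_dist mu x0 n) (brw_step mu)"

text \<open>Global extinction probability: the state 0 is absorbing, so the event
  "eventually no particles" is the increasing union of the events {eta_n = 0}.\<close>
definition glob_ext :: "('x \<Rightarrow> ('x \<Rightarrow> nat) pmf) \<Rightarrow> 'x \<Rightarrow> real" where
  "glob_ext mu x = (SUP n. pmf (brw_dist mu x n) (\<lambda>_. 0))"

definition zhat :: "('x \<Rightarrow> ('x \<Rightarrow> nat) pmf) \<Rightarrow> ('x \<Rightarrow> real) \<Rightarrow> 'x \<Rightarrow> real" where
  "zhat mu z x = (if glob_ext mu x < 1 then (z x - glob_ext mu x) / (1 - glob_ext mu x) else 1)"

definition neigh :: "('x \<Rightarrow> ('x \<Rightarrow> nat) pmf) \<Rightarrow> 'x \<Rightarrow> 'x set" where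
  "neigh mu x = {y. mom mu x y > 0}"

end

theory Submission
  imports Defs
begin

text \<open>Write \<open>q\<close> for the global extinction probability and \<open>a = zhat(x)\<close>. Since
  \<open>q\<close> is the increasing limit of the iterates \<open>G\<^sup>n(0)\<close>, it satisfies \<open>G(q) \<le> q\<close>; since
  \<open>G(\<cdot>|x)\<close> is an expectation of monomials \<open>\<Prod>\<^sub>y s(y)\<^bsup>f(y)\<^esup>\<close> with coordinates in
  \<open>[0,1]\<close>, it lies below the chord towards \<open>1\<close>: \<open>G((1-a)q + a|x) \<le> (1-a)G(q|x) + a\<close>.
  Now \<open>z = (1-zhat)q + zhat\<close>, so \<open>z(x) = (1-a)q(x) + a\<close>, and \<open>zhat \<le> a\<close> on the
  neighbours of \<open>x\<close> means \<open>z \<le> (1-a)q + a\<close> there. If the inequality were strict at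
  some neighbour, strict monotonicity of \<open>G(\<cdot>|x)\<close> in the coordinates of the
  neighbours would give \<open>G(z|x) < (1-a)q(x) + a = z(x)\<close>, contradicting \<open>G(z) \<ge> z\<close>.
  So \<open>zhat\<close> has no strict local maximum, and induction along paths \<open>x \<rightarrow> y\<close> gives
  the same for the set of vertices reachable from \<open>x\<close>.\<close>

lemma expectation_bind_pmf_bounded:
  fixes h :: "'b \<Rightarrow> real"
  assumes "\<And>y. \<bar>h y\<bar> \<le> B"
  shows "measure_pmf.expectation (bind_pmf p f) h =
         measure_pmf.expectation p (\<lambda>x. measure_pmf.expectation (f x) h)"
  unfolding measure_pmf_bind
  by (rule integral_bind[where K="count_space UNIV" and B=B and B'=1])
    (use assms in \<open>auto intro: measure_pmf_in_subprob_algebra measure_pmf.finite_measure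
       simp: measure_pmf.emeasure_space_1\<close>)

lemma integrable_measure_pmf_bounded:
  fixes h :: "'b \<Rightarrow> real"
  assumes "\<And>y. \<bar>h y\<bar> \<le> B"
  shows "integrable (measure_pmf p) h"
  by (rule measure_pmf.integrable_const_bound[where B=B]) (use assms in auto)

lemma expectation_measure_pmf_unit_interval:
  fixes h :: "'b \<Rightarrow> real"
  assumes "\<And>y. 0 \<le> h y \<and> h y \<le> 1"
  shows "0 \<le> measure_pmf.expectation p h \<and> measure_pmf.expectation p h \<le> 1"
proof
  show "0 \<le> measure_pmf.expectation p h"
    using assms by (auto intro: integral_nonneg_AE)
  have "measure_pmf.expectation p h \<le> measure_pmf.expectation p (\<lambda>_. 1)"
    by (rule integral_mono) (use assms in \<open>auto intro: integrable_measure_pmf_bounded[where B=1]\<close>)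
  then show "measure_pmf.expectation p h \<le> 1" by simp
qed

lemma convex_comb_mult_le:
  fixes t a b p :: real
  assumes "0 \<le> t" "t \<le> 1" "0 \<le> a" "a \<le> 1" "b \<le> 1" "p \<le> (1 - t) * b + t"
  shows "((1 - t) * a + t) * p \<le> (1 - t) * (a * b) + t"
proof -
  have "((1 - t) * a + t) * p \<le> ((1 - t) * a + t) * ((1 - t) * b + t)"
    using assms by (intro mult_left_mono) auto
  also have "\<dots> = (1 - t) * (a * b) + t - t * (1 - t) * (1 - a) * (1 - b)"
    by (simp add: algebra_simps)
  also have "\<dots> \<le> (1 - t) * (a * b) + t"
    using assms by simp
  finally show ?thesis .
qed

lemma prod_convex_comb_le:
  fixes t :: real
  assumes "finite A" "0 \<le> t" "t \<le> 1" "\<And>i. i \<in> A \<Longrightarrow> 0 \<le> a i \<and> a i \<le> 1"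
  shows "(\<Prod>i\<in>A. (1 - t) * a i + t) \<le> (1 - t) * (\<Prod>i\<in>A. a i) + t"
  using assms(1,4)
proof (induction A rule: finite_induct)
  case (insert i A)
  have "((1 - t) * a i + t) * (\<Prod>j\<in>A. (1 - t) * a j + t) \<le> (1 - t) * (a i * (\<Prod>j\<in>A. a j)) + t"
    using insert assms(2,3) by (intro convex_comb_mult_le) (auto intro: prod_le_1)
  then show ?case using insert by simp
qed simp

lemma fin_supp_add: "fin_supp f \<Longrightarrow> fin_supp g \<Longrightarrow> fin_supp (\<lambda>y. f y + g y)"
  unfolding fin_supp_def
  by (rule finite_subset[of _ "{y. f y \<noteq> 0} \<union> {y. g y \<noteq> 0}"]) auto

lemma fin_supp_sum:
  "finite S \<Longrightarrow> (\<And>x. x \<in> S \<Longrightarrow> fin_supp (F x)) \<Longrightarrow> fin_supp (\<lambda>y. \<Sum>x\<in>S. F x y)"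
  by (induction S rule: finite_induct) (auto intro: fin_supp_add simp: fin_supp_def)

lemma fin_supp_zero [simp]: "fin_supp (\<lambda>_. 0)"
  by (simp add: fin_supp_def)

lemma fin_supp_indicator: "fin_supp (\<lambda>y. if y = x then 1 else 0 :: nat)"
  by (simp add: fin_supp_def)

definition in_unit_cube :: "('x \<Rightarrow> real) \<Rightarrow> bool" where
  "in_unit_cube s \<longleftrightarrow> (\<forall>y. 0 \<le> s y \<and> s y \<le> 1)"

definition conf_pow :: "('x \<Rightarrow> real) \<Rightarrow> ('x \<Rightarrow> nat) \<Rightarrow> real" where
  "conf_pow s f = (\<Prod>y\<in>{y. f y \<noteq> 0}. s y ^ f y)"

lemma genfun_conf_pow: "genfun mu s x = measure_pmf.expectation (mu x) (conf_pow s)"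
  unfolding genfun_def conf_pow_def ..

lemma conf_pow_unit_interval: "in_unit_cube s \<Longrightarrow> 0 \<le> conf_pow s f \<and> conf_pow s f \<le> 1"
  unfolding conf_pow_def in_unit_cube_def
  by (auto intro!: prod_nonneg prod_le_1 power_le_one)

lemma abs_conf_pow_le_1: "in_unit_cube s \<Longrightarrow> \<bar>conf_pow s f\<bar> \<le> 1"
  using conf_pow_unit_interval[of s f] by auto

lemma integrable_conf_pow: "in_unit_cube s \<Longrightarrow> integrable (measure_pmf p) (conf_pow s)"
  by (rule integrable_measure_pmf_bounded[OF abs_conf_pow_le_1])

lemma conf_pow_zero_conf [simp]: "conf_pow s (\<lambda>_. 0) = 1"
  by (simp add: conf_pow_def)

lemma conf_pow_indicator: "conf_pow s (\<lambda>y. if y = x then 1 else 0) = s x"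
proof -
  have "{y. (if y = x then 1 else 0 :: nat) \<noteq> 0} = {x}" by auto
  then show ?thesis by (simp add: conf_pow_def)
qed

lemma conf_pow_zero_vector:
  assumes "fin_supp f"
  shows "conf_pow (\<lambda>_. 0) f = indicator {\<lambda>_. 0} f"
proof (cases "f = (\<lambda>_. 0)")
  case False
  then obtain y where "f y \<noteq> 0" by auto
  then have "conf_pow (\<lambda>_. 0) f = 0"
    unfolding conf_pow_def by (intro prod_zero) (use assms in \<open>auto simp: fin_supp_def\<close>)
  then show ?thesis using False by simp
qed simp

lemma conf_pow_superset:
  assumes "finite U" "{y. f y \<noteq> 0} \<subseteq> U"
  shows "conf_pow s f = (\<Prod>y\<in>U. s y ^ f y)"
  unfolding conf_pow_def by (rule prod.mono_neutral_left) (use assms in auto)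

lemma conf_pow_add:
  assumes "fin_supp f" "fin_supp g"
  shows "conf_pow s (\<lambda>y. f y + g y) = conf_pow s f * conf_pow s g"
proof -
  let ?U = "{y. f y \<noteq> 0} \<union> {y. g y \<noteq> 0}"
  have U: "finite ?U" using assms by (auto simp: fin_supp_def)
  have "conf_pow s (\<lambda>y. f y + g y) = (\<Prod>y\<in>?U. s y ^ f y * s y ^ g y)"
    by (subst conf_pow_superset[OF U]) (auto simp: power_add)
  also have "\<dots> = conf_pow s f * conf_pow s g"
    by (simp add: prod.distrib conf_pow_superset[OF U])
  finally show ?thesis .
qed

lemma conf_pow_sum:
  assumes "finite S" "\<And>x. x \<in> S \<Longrightarrow> fin_supp (F x)"
  shows "conf_pow s (\<lambda>y. \<Sum>x\<in>S. F x y) = (\<Prod>x\<in>S. conf_pow s (F x))"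
  using assms
proof (induction S rule: finite_induct)
  case (insert a S)
  then have "conf_pow s (\<lambda>y. F a y + (\<Sum>x\<in>S. F x y)) = conf_pow s (F a) * conf_pow s (\<lambda>y. \<Sum>x\<in>S. F x y)"
    by (intro conf_pow_add) (auto intro: fin_supp_sum)
  then show ?case using insert by simp
qed simp

lemma conf_pow_mono:
  assumes "\<And>y. 0 \<le> s y" "\<And>y. s y \<le> t y"
  shows "conf_pow s f \<le> conf_pow t f"
  unfolding conf_pow_def using assms by (auto intro!: prod_mono power_mono)

lemma conf_pow_strict_mono:
  assumes "finite {y. f y \<noteq> 0}" "\<And>y. f y \<noteq> 0 \<Longrightarrow> 0 \<le> s y \<and> s y \<le> t y \<and> 0 < t y"
    and "f y0 \<noteq> 0" "s y0 < t y0"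
  shows "conf_pow s f < conf_pow t f"
  unfolding conf_pow_def
  by (rule prod_mono_strict[where i=y0])
    (use assms in \<open>auto intro: power_strict_mono power_mono\<close>)

lemma conf_pow_Sigma:
  assumes "finite {y. f y \<noteq> 0}"
  shows "conf_pow s f = (\<Prod>(y, i)\<in>(SIGMA y:{y. f y \<noteq> 0}. {..<f y}). s y)"
proof -
  have "conf_pow s f = (\<Prod>y | f y \<noteq> 0. \<Prod>i<f y. s y)"
    by (simp add: conf_pow_def)
  also have "\<dots> = (\<Prod>(y, i)\<in>(SIGMA y:{y. f y \<noteq> 0}. {..<f y}). s y)"
    using assms by (rule prod.Sigma) simp
  finally show ?thesis .
qed

lemma conf_pow_convex_comb_le:
  fixes t :: real
  assumes "in_unit_cube s" "0 \<le> t" "t \<le> 1"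
  shows "conf_pow (\<lambda>y. (1 - t) * s y + t) f \<le> (1 - t) * conf_pow s f + t"
proof (cases "finite {y. f y \<noteq> 0}")
  case True
  then show ?thesis
    unfolding conf_pow_Sigma[OF True] split_def
    using assms by (intro prod_convex_comb_le) (auto simp: in_unit_cube_def)
qed (simp add: conf_pow_def)

lemma in_unit_cube_genfun:
  assumes "in_unit_cube s"
  shows "in_unit_cube (genfun mu s)"
  unfolding in_unit_cube_def genfun_conf_pow
  by (intro allI expectation_measure_pmf_unit_interval conf_pow_unit_interval[OF assms])

lemma genfun_mono:
  assumes "in_unit_cube s" "in_unit_cube t" "\<And>y. s y \<le> t y"
  shows "genfun mu s x \<le> genfun mu t x"
  unfolding genfun_conf_pow
  using assms by (intro integral_mono integrable_conf_pow conf_pow_mono) (auto simp: in_unit_cube_def)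

lemma in_unit_cube_convex_comb:
  fixes t :: real
  assumes "in_unit_cube s" "0 \<le> t" "t \<le> 1"
  shows "in_unit_cube (\<lambda>y. (1 - t) * s y + t)"
  unfolding in_unit_cube_def
proof
  fix y
  have "(1 - t) * s y \<le> 1 - t"
    using assms by (intro mult_left_le) (auto simp: in_unit_cube_def)
  then show "0 \<le> (1 - t) * s y + t \<and> (1 - t) * s y + t \<le> 1"
    using assms by (auto simp: in_unit_cube_def)
qed

lemma genfun_convex_comb_le:
  fixes t :: real
  assumes "in_unit_cube s" "0 \<le> t" "t \<le> 1"
  shows "genfun mu (\<lambda>y. (1 - t) * s y + t) x \<le> (1 - t) * genfun mu s x + t"
proof -
  have "genfun mu (\<lambda>y. (1 - t) * s y + t) x \<le>
        measure_pmf.expectation (mu x) (\<lambda>f. (1 - t) * conf_pow s f + t)"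
    unfolding genfun_conf_pow
    using integrable_conf_pow[OF assms(1)]
    by (intro integral_mono integrable_conf_pow in_unit_cube_convex_comb conf_pow_convex_comb_le assms) simp
  also have "\<dots> = (1 - t) * genfun mu s x + t"
    using integrable_conf_pow[OF assms(1)] by (simp add: genfun_conf_pow)
  finally show ?thesis .
qed

lemma mem_neigh_iff: "y \<in> neigh mu x \<longleftrightarrow> (\<exists>f\<in>set_pmf (mu x). f y \<noteq> 0)"
proof -
  have "y \<notin> neigh mu x \<longleftrightarrow> (AE f in measure_pmf (mu x). ennreal (real (f y)) = 0)"
    by (simp add: neigh_def mom_def nn_integral_0_iff_AE)
  then show ?thesis by (auto simp: AE_measure_pmf_iff)
qed

lemma genfun_strict_mono:
  assumes "is_BRW mu" "in_unit_cube s" "in_unit_cube t"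
    and "\<forall>y\<in>neigh mu x. s y \<le> t y \<and> 0 < t y"
    and "y0 \<in> neigh mu x" "s y0 < t y0"
  shows "genfun mu s x < genfun mu t x"
proof -
  obtain f0 where f0: "f0 \<in> set_pmf (mu x)" "f0 y0 \<noteq> 0"
    using assms(5) mem_neigh_iff by metis
  have fin: "finite {y. f y \<noteq> 0}" if "f \<in> set_pmf (mu x)" for f
    using assms(1) that by (auto simp: is_BRW_def fin_supp_def)
  have le: "0 \<le> s y \<and> s y \<le> t y \<and> 0 < t y" if "f \<in> set_pmf (mu x)" "f y \<noteq> 0" for f y
    using assms(2,4) that mem_neigh_iff[of y mu x] by (auto simp: in_unit_cube_def)
  have "conf_pow s f \<le> conf_pow t f" if "f \<in> set_pmf (mu x)" for f
    unfolding conf_pow_def using le[OF that] by (auto intro!: prod_mono power_mono)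
  moreover have "conf_pow s f0 < conf_pow t f0"
    using fin[OF f0(1)] le[OF f0(1)] f0(2) assms(6) by (rule conf_pow_strict_mono)
  then show ?thesis
    unfolding genfun_conf_pow
    using f0(1) calculation assms(2,3)
    by (intro measure_pmf.integral_less_AE[where A="{f0}"] integrable_conf_pow)
      (auto simp: AE_measure_pmf_iff measure_pmf.emeasure_eq_measure measure_pmf_single set_pmf_eq')
qed

lemma set_pmf_offspring_rep:
  assumes "is_BRW mu"
  shows "set_pmf (offspring_rep mu x n) \<subseteq> {f. fin_supp f}"
  using assms by (induction n) (auto simp: is_BRW_def intro!: fin_supp_add)

lemma expectation_offspring_rep_conf_pow:
  assumes "is_BRW mu" "in_unit_cube s"
  shows "measure_pmf.expectation (offspring_rep mu x n) (conf_pow s) = genfun mu s x ^ n"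
proof (induction n)
  case (Suc n)
  have add: "measure_pmf.expectation (offspring_rep mu x n) (\<lambda>g. conf_pow s (\<lambda>y. f y + g y))
        = conf_pow s f * genfun mu s x ^ n" if "f \<in> set_pmf (mu x)" for f
  proof -
    have "fin_supp f" using assms(1) that by (auto simp: is_BRW_def)
    then have "measure_pmf.expectation (offspring_rep mu x n) (\<lambda>g. conf_pow s (\<lambda>y. f y + g y))
        = measure_pmf.expectation (offspring_rep mu x n) (\<lambda>g. conf_pow s f * conf_pow s g)"
      by (intro integral_cong_AE AE_pmfI)
        (use set_pmf_offspring_rep[OF assms(1)] in \<open>auto intro: conf_pow_add\<close>)
    then show ?thesis using Suc by simp
  qed
  have "measure_pmf.expectation (offspring_rep mu x (Suc n)) (conf_pow s) =
      measure_pmf.expectation (mu x)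
        (\<lambda>f. measure_pmf.expectation (offspring_rep mu x n) (\<lambda>g. conf_pow s (\<lambda>y. f y + g y)))"
    by (simp add: expectation_bind_pmf_bounded[OF abs_conf_pow_le_1[OF assms(2)]])
  also have "\<dots> = measure_pmf.expectation (mu x) (\<lambda>f. conf_pow s f * genfun mu s x ^ n)"
    by (intro integral_cong_AE AE_pmfI) (simp_all add: add)
  finally show ?case by (simp add: genfun_conf_pow)
qed simp

lemma set_pmf_brw_step:
  assumes "is_BRW mu" "fin_supp eta"
  shows "set_pmf (brw_step mu eta) \<subseteq> {f. fin_supp f}"
proof -
  let ?S = "{x. eta x \<noteq> 0}"
  have S: "finite ?S" using assms(2) by (simp add: fin_supp_def)
  show ?thesis
    unfolding brw_step_def Let_def set_map_pmf set_Pi_pmf[OF S]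
  proof safe
    fix F assume "F \<in> PiE_dflt ?S (\<lambda>_. 0) (set_pmf \<circ> (\<lambda>x. offspring_rep mu x (eta x)))"
    then have "\<And>x. x \<in> ?S \<Longrightarrow> fin_supp (F x)"
      using set_pmf_offspring_rep[OF assms(1)] unfolding PiE_dflt_def by fastforce
    then show "fin_supp (\<lambda>y. \<Sum>x\<in>?S. F x y)" by (rule fin_supp_sum[OF S])
  qed
qed

lemma expectation_brw_step_conf_pow:
  assumes "is_BRW mu" "fin_supp eta" "in_unit_cube s"
  shows "measure_pmf.expectation (brw_step mu eta) (conf_pow s) = conf_pow (genfun mu s) eta"
proof -
  let ?S = "{x. eta x \<noteq> 0}"
  let ?P = "Pi_pmf ?S (\<lambda>_. 0) (\<lambda>x. offspring_rep mu x (eta x))"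
  have S: "finite ?S" using assms(2) by (simp add: fin_supp_def)
  have "measure_pmf.expectation (brw_step mu eta) (conf_pow s) =
        measure_pmf.expectation ?P (\<lambda>F. conf_pow s (\<lambda>y. \<Sum>x\<in>?S. F x y))"
    unfolding brw_step_def Let_def integral_map_pmf by simp
  also have "\<dots> = measure_pmf.expectation ?P (\<lambda>F. \<Prod>x\<in>?S. conf_pow s (F x))"
  proof (intro integral_cong_AE AE_pmfI)
    fix F assume "F \<in> set_pmf ?P"
    then have "\<And>x. x \<in> ?S \<Longrightarrow> fin_supp (F x)"
      unfolding set_Pi_pmf[OF S] using set_pmf_offspring_rep[OF assms(1)] by (auto simp: PiE_dflt_def)
    then show "conf_pow s (\<lambda>y. \<Sum>x\<in>?S. F x y) = (\<Prod>x\<in>?S. conf_pow s (F x))"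
      by (rule conf_pow_sum[OF S])
  qed simp_all
  also have "\<dots> = (\<Prod>x\<in>?S. measure_pmf.expectation (offspring_rep mu x (eta x)) (conf_pow s))"
    using conf_pow_unit_interval[OF assms(3)]
    by (intro expectation_prod_Pi_pmf S integrable_conf_pow assms(3)) simp
  also have "\<dots> = conf_pow (genfun mu s) eta"
    by (simp add: conf_pow_def expectation_offspring_rep_conf_pow[OF assms(1,3)])
  finally show ?thesis .
qed

lemma set_pmf_brw_dist:
  assumes "is_BRW mu"
  shows "set_pmf (brw_dist mu x n) \<subseteq> {f. fin_supp f}"
  using set_pmf_brw_step[OF assms] by (induction n) (auto simp: fin_supp_indicator)

lemma expectation_brw_dist_conf_pow:
  assumes "is_BRW mu" "in_unit_cube s"
  shows "measure_pmf.expectation (brw_dist mu x n) (conf_pow s) = (genfun mu ^^ n) s x"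
  using assms(2)
proof (induction n arbitrary: s)
  case (Suc n)
  have "measure_pmf.expectation (brw_dist mu x (Suc n)) (conf_pow s) =
      measure_pmf.expectation (brw_dist mu x n)
        (\<lambda>e. measure_pmf.expectation (brw_step mu e) (conf_pow s))"
    by (simp add: expectation_bind_pmf_bounded[OF abs_conf_pow_le_1[OF Suc.prems]])
  also have "\<dots> = measure_pmf.expectation (brw_dist mu x n) (conf_pow (genfun mu s))"
    using set_pmf_brw_dist[OF assms(1)] expectation_brw_step_conf_pow[OF assms(1) _ Suc.prems]
    by (intro integral_cong_AE AE_pmfI) auto
  also have "\<dots> = (genfun mu ^^ Suc n) s x"
    by (simp add: Suc.IH[OF in_unit_cube_genfun[OF Suc.prems]] funpow_Suc_right del: funpow.simps)
  finally show ?case .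
qed (simp add: conf_pow_indicator)

lemma pmf_brw_dist_extinct:
  assumes "is_BRW mu"
  shows "pmf (brw_dist mu x n) (\<lambda>_. 0) = (genfun mu ^^ n) (\<lambda>_. 0) x"
proof -
  have "pmf (brw_dist mu x n) (\<lambda>_. 0) = measure_pmf.expectation (brw_dist mu x n) (indicator {\<lambda>_. 0})"
    by (simp add: measure_pmf_single)
  also have "\<dots> = measure_pmf.expectation (brw_dist mu x n) (conf_pow (\<lambda>_. 0))"
    using set_pmf_brw_dist[OF assms, of x n]
    by (intro integral_cong_AE AE_pmfI) (auto simp: conf_pow_zero_vector)
  also have "\<dots> = (genfun mu ^^ n) (\<lambda>_. 0) x"
    by (rule expectation_brw_dist_conf_pow[OF assms]) (simp add: in_unit_cube_def)
  finally show ?thesis .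
qed

lemma in_unit_cube_genfun_iterate: "in_unit_cube ((genfun mu ^^ n) (\<lambda>_. 0))"
proof (induction n)
  case 0
  then show ?case by (simp add: in_unit_cube_def)
qed (simp add: in_unit_cube_genfun)

lemma incseq_genfun_iterate: "incseq (\<lambda>n. (genfun mu ^^ n) (\<lambda>_. 0) x)"
proof (rule incseq_SucI)
  show "(genfun mu ^^ n) (\<lambda>_. 0) x \<le> (genfun mu ^^ Suc n) (\<lambda>_. 0) x" for n
  proof (induction n arbitrary: x)
    case 0
    then show ?case
      using in_unit_cube_genfun_iterate[of 1 mu] by (simp add: in_unit_cube_def)
  next
    case (Suc n)
    then show ?case
      using genfun_mono[OF in_unit_cube_genfun_iterate[of n mu] in_unit_cube_genfun_iterate[of "Suc n" mu] Suc.IH]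
      by simp
  qed
qed

lemma glob_ext_eq_SUP_genfun_iterate:
  assumes "is_BRW mu"
  shows "glob_ext mu x = (SUP n. (genfun mu ^^ n) (\<lambda>_. 0) x)"
  unfolding glob_ext_def pmf_brw_dist_extinct[OF assms] ..

lemma genfun_iterate_tendsto_glob_ext:
  assumes "is_BRW mu"
  shows "(\<lambda>n. (genfun mu ^^ n) (\<lambda>_. 0) x) \<longlonglongrightarrow> glob_ext mu x"
  unfolding glob_ext_eq_SUP_genfun_iterate[OF assms]
  by (rule LIMSEQ_incseq_SUP[OF _ incseq_genfun_iterate], rule bdd_aboveI[where M=1])
    (use in_unit_cube_genfun_iterate[of _ mu] in \<open>auto simp: in_unit_cube_def\<close>)

lemma genfun_iterate_le_glob_ext:
  assumes "is_BRW mu"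
  shows "(genfun mu ^^ n) (\<lambda>_. 0) x \<le> glob_ext mu x"
  by (rule incseq_le[OF incseq_genfun_iterate genfun_iterate_tendsto_glob_ext[OF assms]])

lemma in_unit_cube_glob_ext:
  assumes "is_BRW mu"
  shows "in_unit_cube (glob_ext mu)"
  unfolding in_unit_cube_def
proof
  fix x
  have "0 \<le> glob_ext mu x"
    using genfun_iterate_le_glob_ext[OF assms, of 0] by simp
  moreover have "glob_ext mu x \<le> 1"
    using in_unit_cube_genfun_iterate[of _ mu]
    by (intro LIMSEQ_le_const2[OF genfun_iterate_tendsto_glob_ext[OF assms]]) (simp add: in_unit_cube_def)
  ultimately show "0 \<le> glob_ext mu x \<and> glob_ext mu x \<le> 1" ..
qed

lemma genfun_glob_ext_le:
  assumes "is_BRW mu"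
  shows "genfun mu (glob_ext mu) x \<le> glob_ext mu x"
proof -
  let ?P = "\<lambda>n. (genfun mu ^^ n) (\<lambda>_. 0)"
  have "(\<lambda>n. measure_pmf.expectation (mu x) (conf_pow (?P n))) \<longlonglongrightarrow>
        measure_pmf.expectation (mu x) (conf_pow (glob_ext mu))"
  proof (rule integral_dominated_convergence[where w="\<lambda>_. 1"])
    show "AE f in measure_pmf (mu x). (\<lambda>n. conf_pow (?P n) f) \<longlonglongrightarrow> conf_pow (glob_ext mu) f"
      unfolding conf_pow_def
      by (intro AE_pmfI tendsto_prod tendsto_power genfun_iterate_tendsto_glob_ext assms)
    show "\<And>n. AE f in measure_pmf (mu x). norm (conf_pow (?P n) f) \<le> 1"
      using abs_conf_pow_le_1[OF in_unit_cube_genfun_iterate[of _ mu]] by simp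
  qed simp_all
  then have lim: "(\<lambda>n. genfun mu (?P n) x) \<longlonglongrightarrow> genfun mu (glob_ext mu) x"
    by (simp only: genfun_conf_pow)
  have "genfun mu (?P n) x \<le> glob_ext mu x" for n
    using genfun_iterate_le_glob_ext[OF assms, of "Suc n"] by simp
  then show ?thesis by (intro LIMSEQ_le_const2[OF lim]) simp
qed

lemma eq_or_greater_if_le_imp_eq:
  fixes g :: "'a \<Rightarrow> 'b::linorder"
  assumes "\<forall>y\<in>S. g y \<le> c \<Longrightarrow> \<forall>y\<in>S. g y = c"
  shows "(\<forall>y\<in>S. g y = c) \<or> (\<exists>y\<in>S. g y > c)"
  using assms not_le by blast

locale brw_sub_fixed_point =
  fixes mu :: "'x \<Rightarrow> ('x \<Rightarrow> nat) pmf" and z :: "'x \<Rightarrow> real"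
  assumes brw: "is_BRW mu"
    and z_le_1: "\<And>x. z x \<le> 1"
    and glob_ext_le_z: "\<And>x. glob_ext mu x \<le> z x"
    and z_le_genfun: "\<And>x. z x \<le> genfun mu z x"
begin

lemma glob_ext_unit_interval: "0 \<le> glob_ext mu x \<and> glob_ext mu x \<le> 1"
  using in_unit_cube_glob_ext[OF brw] by (simp add: in_unit_cube_def)

lemma in_unit_cube_z: "in_unit_cube z"
  unfolding in_unit_cube_def using glob_ext_unit_interval glob_ext_le_z z_le_1 by (meson order_trans)

lemma zhat_unit_interval: "0 \<le> zhat mu z x \<and> zhat mu z x \<le> 1"
  using glob_ext_unit_interval[of x] glob_ext_le_z[of x] z_le_1[of x]
  by (auto simp: zhat_def field_simps)

lemma z_eq_zhat: "z x = (1 - zhat mu z x) * glob_ext mu x + zhat mu z x"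
  using glob_ext_unit_interval[of x] glob_ext_le_z[of x] z_le_1[of x]
  by (auto simp: zhat_def field_simps)

lemma glob_ext_less_1_if_zhat_less_1: "zhat mu z x < 1 \<Longrightarrow> glob_ext mu x < 1"
  by (auto simp: zhat_def split: if_splits)

lemma zhat_neigh_le_imp_eq:
  assumes le: "\<forall>y\<in>neigh mu x. zhat mu z y \<le> zhat mu z x"
  shows "\<forall>y\<in>neigh mu x. zhat mu z y = zhat mu z x"
proof (rule ccontr)
  assume "\<not> ?thesis"
  then obtain y0 where y0: "y0 \<in> neigh mu x" "zhat mu z y0 < zhat mu z x"
    using le by force
  define a where "a = zhat mu z x"
  define w where "w = (\<lambda>y. (1 - a) * glob_ext mu y + a)"
  have a: "0 < a" "a \<le> 1"
    using y0(2) zhat_unit_interval[of y0] zhat_unit_interval[of x] by (auto simp: a_def)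
  have w_unit: "in_unit_cube w"
    unfolding w_def using a by (intro in_unit_cube_convex_comb in_unit_cube_glob_ext brw) auto
  have w_minus_z: "w y - z y = (a - zhat mu z y) * (1 - glob_ext mu y)" for y
    using z_eq_zhat[of y] by (simp add: w_def algebra_simps)
  have "\<forall>y\<in>neigh mu x. z y \<le> w y \<and> 0 < w y"
  proof
    fix y assume "y \<in> neigh mu x"
    then have "0 \<le> w y - z y"
      using le glob_ext_unit_interval[of y] by (simp add: w_minus_z a_def)
    moreover have "a \<le> w y"
      using a glob_ext_unit_interval[of y] by (simp add: w_def)
    ultimately show "z y \<le> w y \<and> 0 < w y" using a by simp
  qed
  moreover have "0 < (a - zhat mu z y0) * (1 - glob_ext mu y0)"
    using y0(2) glob_ext_less_1_if_zhat_less_1[of y0] a by (simp add: a_def)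
  then have "z y0 < w y0"
    using w_minus_z[of y0] by simp
  ultimately have "genfun mu z x < genfun mu w x"
    by (rule genfun_strict_mono[OF brw in_unit_cube_z w_unit _ y0(1)])
  also have "\<dots> \<le> (1 - a) * genfun mu (glob_ext mu) x + a"
    unfolding w_def using a by (intro genfun_convex_comb_le in_unit_cube_glob_ext brw) auto
  also have "\<dots> \<le> (1 - a) * glob_ext mu x + a"
    using genfun_glob_ext_le[OF brw, of x] a by (simp add: mult_left_mono)
  also have "\<dots> = z x"
    using z_eq_zhat[of x] by (simp add: a_def)
  finally show False
    using z_le_genfun[of x] by simp
qed

lemma zhat_reach_le_imp_eq:
  assumes le: "\<forall>y\<in>{y. reach mu x y}. zhat mu z y \<le> zhat mu z x"
  shows "\<forall>y\<in>{y. reach mu x y}. zhat mu z y = zhat mu z x"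
proof
  fix y assume "y \<in> {y. reach mu x y}"
  then have "(x, y) \<in> {(a, b). mom mu a b > 0}\<^sup>*"
    by (simp add: reach_def)
  then show "zhat mu z y = zhat mu z x"
  proof (induction rule: rtrancl_induct)
    case (step y y')
    have "\<forall>v\<in>neigh mu y. zhat mu z v \<le> zhat mu z y"
    proof
      fix v assume "v \<in> neigh mu y"
      then have "(y, v) \<in> {(a, b). mom mu a b > 0}"
        by (simp add: neigh_def)
      with step(1) have "reach mu x v"
        unfolding reach_def by (rule rtrancl_into_rtrancl)
      then show "zhat mu z v \<le> zhat mu z y"
        using le step.IH by simp
    qed
    moreover have "y' \<in> neigh mu y"
      using step(2) by (simp add: neigh_def)
    ultimately have "zhat mu z y' = zhat mu z y"
      using zhat_neigh_le_imp_eq by blast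
    then show ?case using step.IH by simp
  qed simp
qed

end

theorem mainTheorem1:
  fixes mu :: "'x::countable \<Rightarrow> ('x \<Rightarrow> nat) pmf" and z :: "'x \<Rightarrow> real"
  assumes "BRW_standing mu"
    and "\<exists>x. glob_ext mu x < 1"
    and "\<And>x. 0 \<le> z x \<and> z x \<le> 1"
    and "\<And>x. glob_ext mu x \<le> z x"
    and "\<And>x. genfun mu z x \<ge> z x"
  shows "\<forall>x. (neigh mu x \<noteq> {} \<longrightarrow>
              ((\<forall>y\<in>neigh mu x. zhat mu z y = zhat mu z x) \<or>
               (\<exists>y\<in>neigh mu x. zhat mu z y > zhat mu z x)))
           \<and> (zhat mu z x = 1 \<longrightarrow> (\<forall>y\<in>neigh mu x. zhat mu z y = 1))
           \<and> ({y. reach mu x y} \<noteq> {} \<longrightarrow>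
              ((\<forall>y\<in>{y. reach mu x y}. zhat mu z y = zhat mu z x) \<or>
               (\<exists>y\<in>{y. reach mu x y}. zhat mu z y > zhat mu z x)))
           \<and> (zhat mu z x = 1 \<longrightarrow> (\<forall>y\<in>{y. reach mu x y}. zhat mu z y = 1))"
proof -
  interpret brw_sub_fixed_point mu z
    using assms(1,3-5) by unfold_locales (auto simp: BRW_standing_def)
  show ?thesis
  proof (intro allI conjI impI)
    fix x
    show "(\<forall>y\<in>neigh mu x. zhat mu z y = zhat mu z x) \<or> (\<exists>y\<in>neigh mu x. zhat mu z y > zhat mu z x)"
      by (rule eq_or_greater_if_le_imp_eq) (erule zhat_neigh_le_imp_eq)
    show "(\<forall>y\<in>{y. reach mu x y}. zhat mu z y = zhat mu z x) \<or>
          (\<exists>y\<in>{y. reach mu x y}. zhat mu z y > zhat mu z x)"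
      by (rule eq_or_greater_if_le_imp_eq) (erule zhat_reach_le_imp_eq)
    assume x1: "zhat mu z x = 1"
    then have le: "zhat mu z y \<le> zhat mu z x" for y
      using zhat_unit_interval[of y] by simp
    show "\<forall>y\<in>neigh mu x. zhat mu z y = 1"
      using zhat_neigh_le_imp_eq[of x] le x1 by simp
    show "\<forall>y\<in>{y. reach mu x y}. zhat mu z y = 1"
      using zhat_reach_le_imp_eq[of x] le x1 by simp
  qed
qed

end
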